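(* Let $0<\alpha<1$, let $T>0$, let $N\ge 1$, and let $\beta_0,\beta_1,\dots,\beta_N\in\mathbb{R}$ and $\tau_1,\dots,\tau_N\in\mathbb{R}\setminus\{0\}$. Let $f:[0,T]\to\mathbb{R}$ be a real function such that $f'$ is absolutely continuous on $[0,T]$, $f'(0)<\infty$ and $f''\in L^1(0,T)$. Define, for $t\in[0,T]$, the Caputo derivative $$D_t^\alpha f=\frac{1}{\Gamma(1-\alpha)}\int_0^t \frac{f'(s)}{(t-s)^{\alpha}}\,ds=\frac{1}{\Gamma(2-\alpha)}\Big(t^{1-\alpha}f'(0)+\int_0^t (t-s)^{1-\alpha}f''(s)\,ds\Big),$$ the Prony approximation $$\hat D_t^\alpha f=\beta_0 f'(t)+\sum_{k=1}^N\int_0^t \beta_k \exp\!\Big[\frac{s-t}{\tau_k}\Big] f'(s)\,ds,$$ and the truncation error $$\varepsilon(z)=\frac{z^{1-\alpha}}{\Gamma(2-\alpha)}-\beta_0+\sum_{k=1}^N\beta_k\tau_k\big(\exp(-z/\tau_k)-1\big),\qquad z\in[0,T].$$ Then for $t\in[0,T]$ $$D_t^\alpha f-\hat D_t^\alpha f=\varepsilon(t)f'(0)+\int_0^t\varepsilon(z)f''(t-z)\,dz,$$ and for any $t\in[0,T]$ $$\big|D_t^\alpha f-\hat D_t^\alpha f\big|\le \|\varepsilon\|_{L^\infty(0,T)}\Big[|f'(0)|+\|f''\|_{L^1(0,T)}\Big].$$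
   Context: $\Gamma$ denotes the Gamma function. $\|\cdot\|_{L^\infty(0,T)}$ and $\|\cdot\|_{L^1(0,T)}$ are the usual $L^\infty$ and $L^1$ norms on $(0,T)$. The two expressions given for $D_t^\alpha f$ agree for such $f$ (integration by parts); the paper works with the second form. *)

theory Defs
  imports "HOL-Analysis.Analysis"
begin

definition abs_cont_on :: "real \<Rightarrow> real \<Rightarrow> (real \<Rightarrow> real) \<Rightarrow> bool" where
  "abs_cont_on a b g \<longleftrightarrow>
     (\<forall>e>0. \<exists>d>0. \<forall>(n::nat) (u::nat \<Rightarrow> real) (v::nat \<Rightarrow> real).
        (\<forall>i<n. a \<le> u i \<and> u i \<le> v i \<and> v i \<le> b) \<and>
        (\<forall>i<n. \<forall>j<n. i \<noteq> j \<longrightarrow> {u i<..<v i} \<inter> {u j<..<v j} = {}) \<and>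
        (\<Sum>i<n. v i - u i) < d
        \<longrightarrow> (\<Sum>i<n. \<bar>g (v i) - g (u i)\<bar>) < e)"

text \<open>Caputo derivative, in the second (integrated by parts) form used in the paper;
 f1 = f', f2 = f''.\<close>
definition caputo :: "real \<Rightarrow> (real \<Rightarrow> real) \<Rightarrow> (real \<Rightarrow> real) \<Rightarrow> real \<Rightarrow> real" where
  "caputo \<alpha> f1 f2 t =
     (t powr (1 - \<alpha>) * f1 0 + (LINT s:{0..t}|lborel. (t - s) powr (1 - \<alpha>) * f2 s)) / Gamma (2 - \<alpha>)"

definition prony :: "nat \<Rightarrow> (nat \<Rightarrow> real) \<Rightarrow> (nat \<Rightarrow> real) \<Rightarrow> (real \<Rightarrow> real) \<Rightarrow> real \<Rightarrow> real" where
  "prony N \<beta> \<tau> f1 t =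
     \<beta> 0 * f1 t + (\<Sum>k=1..N. LINT s:{0..t}|lborel. \<beta> k * exp ((s - t) / \<tau> k) * f1 s)"

definition prony_err :: "real \<Rightarrow> nat \<Rightarrow> (nat \<Rightarrow> real) \<Rightarrow> (nat \<Rightarrow> real) \<Rightarrow> real \<Rightarrow> real" where
  "prony_err \<alpha> N \<beta> \<tau> z =
     z powr (1 - \<alpha>) / Gamma (2 - \<alpha>) - \<beta> 0 + (\<Sum>k=1..N. \<beta> k * \<tau> k * (exp (- z / \<tau> k) - 1))"

end

theory Submission
  imports Defs
begin

text \<open>
  The Caputo form already integrates f'' against the kernel. For each exponential kernel,
  integration by parts against the absolutely continuous f' gives
    int_0^t exp((s - t)/tau) f''(s) ds
      = f'(t) - exp(-t/tau) f'(0) - (1/tau) int_0^t exp((s - t)/tau) f'(s) ds,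
  and together with int_0^t f'' = f'(t) - f'(0) the Prony terms reassemble into
  eps(t) f'(0) + int_0^t eps(t - s) f''(s) ds. The bound then follows by estimating eps by its
  supremum.

  The analytic input is the fundamental theorem of calculus for absolutely continuous functions,
  proved for the gauge integral: at tags off the null set where the derivative fails, the
  straddle estimate controls the Riemann sum; the intervals tagged in that null set lie in an
  open set of small measure, so absolute continuity makes their contribution small.
\<close>

definition nonoverlapping_subintervals :: "real \<Rightarrow> real \<Rightarrow> nat \<Rightarrow> (nat \<Rightarrow> real) \<Rightarrow> (nat \<Rightarrow> real) \<Rightarrow> bool"
  where "nonoverlapping_subintervals a b n u v \<longleftrightarrow>
    (\<forall>i<n. a \<le> u i \<and> u i \<le> v i \<and> v i \<le> b) \<and>
    (\<forall>i<n. \<forall>j<n. i \<noteq> j \<longrightarrow> {u i<..<v i} \<inter> {u j<..<v j} = {})"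

lemma abs_cont_on_iff:
  "abs_cont_on a b h \<longleftrightarrow> (\<forall>e>0. \<exists>d>0. \<forall>n u v. nonoverlapping_subintervals a b n u v \<and>
     (\<Sum>i<n. v i - u i) < d \<longrightarrow> (\<Sum>i<n. \<bar>h (v i) - h (u i)\<bar>) < e)"
  unfolding abs_cont_on_def nonoverlapping_subintervals_def by (simp add: conj_assoc)

lemma abs_cont_on_subinterval:
  assumes "abs_cont_on a b h" "a \<le> c" "d \<le> b"
  shows "abs_cont_on c d h"
  using assms unfolding abs_cont_on_def by (smt (verit, ccfv_threshold))

lemma abs_cont_onE:
  assumes "abs_cont_on a b h" "e > 0"
  obtains d where "d > 0" "\<And>n u v. nonoverlapping_subintervals a b n u v \<Longrightarrow>
    (\<Sum>i<n. v i - u i) < d \<Longrightarrow> (\<Sum>i<n. \<bar>h (v i) - h (u i)\<bar>) < e"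
  using assms unfolding abs_cont_on_iff by metis

lemma abs_cont_on_imp_continuous_on:
  assumes "abs_cont_on a b h"
  shows "continuous_on {a..b} h"
  unfolding continuous_on_iff
proof (intro ballI allI impI)
  fix x e :: real
  assume x: "x \<in> {a..b}" and "e > 0"
  obtain d where "d > 0" and d: "\<And>n u v. nonoverlapping_subintervals a b n u v \<Longrightarrow>
      (\<Sum>i<n. v i - u i) < d \<Longrightarrow> (\<Sum>i<n. \<bar>h (v i) - h (u i)\<bar>) < e"
    using abs_cont_onE[OF assms \<open>e > 0\<close>] by blast
  show "\<exists>d>0. \<forall>y\<in>{a..b}. dist y x < d \<longrightarrow> dist (h y) (h x) < e"
  proof (intro exI conjI ballI impI)
    fix y assume "y \<in> {a..b}" "dist y x < d"
    then have "(\<Sum>i<(1::nat). \<bar>h (max x y) - h (min x y)\<bar>) < e"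
      using x by (intro d) (auto simp: nonoverlapping_subintervals_def dist_real_def)
    then show "dist (h y) (h x) < e"
      by (cases "x \<le> y") (auto simp: dist_real_def abs_minus_commute)
  qed (fact \<open>d > 0\<close>)
qed

lemma abs_cont_on_tagged_partial_division:
  assumes "abs_cont_on a b h" "e > 0"
  obtains \<delta> where "\<delta> > 0"
    "\<And>q. q tagged_partial_division_of {a..b} \<Longrightarrow> (\<Sum>(x, K)\<in>q. measure lborel K) < \<delta> \<Longrightarrow>
       (\<Sum>(x, K)\<in>q. \<bar>h (Sup K) - h (Inf K)\<bar>) < e"
proof -
  obtain \<delta> where "\<delta> > 0" and \<delta>: "\<And>n u v. nonoverlapping_subintervals a b n u v \<Longrightarrow>
      (\<Sum>i<n. v i - u i) < \<delta> \<Longrightarrow> (\<Sum>i<n. \<bar>h (v i) - h (u i)\<bar>) < e"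
    using abs_cont_onE[OF assms] by blast
  show ?thesis
  proof (rule that[OF \<open>\<delta> > 0\<close>])
    fix q
    assume q: "q tagged_partial_division_of {a..b}" and small: "(\<Sum>(x, K)\<in>q. measure lborel K) < \<delta>"
    note qD = tagged_partial_division_ofD[OF q]
    obtain f where f: "bij_betw f {..<card q} q"
      using ex_bij_betw_nat_finite[OF qD(1)] lessThan_atLeast0 by metis
    then have fq: "f i \<in> q" if "i < card q" for i
      using that by (auto simp: bij_betw_def)
    define u where "u i = Inf (snd (f i))" for i
    define v where "v i = Sup (snd (f i))" for i
    have K: "snd (f i) = {u i..v i}" "a \<le> u i" "u i \<le> v i" "v i \<le> b" if "i < card q" for i
    proof -
      obtain x K where xK: "f i = (x, K)" by fastforce
      then have "(x, K) \<in> q" using fq[OF that] by simp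
      moreover from qD(4)[OF this] obtain c d where "K = {c..d}" by auto
      ultimately have "x \<in> {c..d}" "{c..d} \<subseteq> {a..b}" "snd (f i) = {c..d}"
        using qD(2,3)[of x K] xK by auto
      then show "snd (f i) = {u i..v i}" "a \<le> u i" "u i \<le> v i" "v i \<le> b"
        by (auto simp: u_def v_def)
    qed
    have "(\<Sum>i<card q. \<bar>h (v i) - h (u i)\<bar>) < e"
    proof (rule \<delta>)
      have "{u i<..<v i} \<inter> {u j<..<v j} = {}" if "i < card q" "j < card q" "i \<noteq> j" for i j
      proof -
        from that have "f i \<noteq> f j" "f i \<in> q" "f j \<in> q"
          using f fq by (auto simp: bij_betw_def inj_on_def)
        then have "interior (snd (f i)) \<inter> interior (snd (f j)) = {}"
          using qD(5)[of "fst (f i)" "snd (f i)" "fst (f j)" "snd (f j)"] by simp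
        with K[of i] K[of j] that show ?thesis
          by simp
      qed
      with K show "nonoverlapping_subintervals a b (card q) u v"
        by (auto simp: nonoverlapping_subintervals_def)
      show "(\<Sum>i<card q. v i - u i) < \<delta>"
        using small sum.reindex_bij_betw[OF f, of "\<lambda>(x, K). measure lborel K"] K by (simp add: split_beta)
    qed
    then show "(\<Sum>(x, K)\<in>q. \<bar>h (Sup K) - h (Inf K)\<bar>) < e"
      using sum.reindex_bij_betw[OF f, of "\<lambda>(x, K). \<bar>h (Sup K) - h (Inf K)\<bar>"]
      by (simp add: split_beta u_def v_def)
  qed
qed

lemma abs_cont_on_lipschitz_mult:
  fixes f \<phi> :: "real \<Rightarrow> real"
  assumes f: "abs_cont_on a b f" and \<phi>: "L-lipschitz_on {a..b} \<phi>"
  shows "abs_cont_on a b (\<lambda>x. \<phi> x * f x)"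
proof -
  obtain B where "B \<ge> 0" and B: "\<And>x. x \<in> {a..b} \<Longrightarrow> \<bar>f x\<bar> \<le> B"
    using continuous_on_compact_bound[OF compact_Icc abs_cont_on_imp_continuous_on[OF f]] by auto
  obtain M where "M \<ge> 0" and M: "\<And>x. x \<in> {a..b} \<Longrightarrow> \<bar>\<phi> x\<bar> \<le> M"
    using continuous_on_compact_bound[OF compact_Icc lipschitz_on_continuous_on[OF \<phi>]] by auto
  have "L \<ge> 0"
    using lipschitz_on_nonneg[OF \<phi>] .
  have var: "\<bar>\<phi> v * f v - \<phi> u * f u\<bar> \<le> M * \<bar>f v - f u\<bar> + L * B * (v - u)"
    if "a \<le> u" "u \<le> v" "v \<le> b" for u v
  proof -
    have "\<phi> v * f v - \<phi> u * f u = \<phi> v * (f v - f u) + (\<phi> v - \<phi> u) * f u"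
      by (simp add: algebra_simps)
    also have "\<bar>\<dots>\<bar> \<le> \<bar>\<phi> v\<bar> * \<bar>f v - f u\<bar> + \<bar>\<phi> v - \<phi> u\<bar> * \<bar>f u\<bar>"
      by (metis abs_mult abs_triangle_ineq)
    also have "\<dots> \<le> M * \<bar>f v - f u\<bar> + (L * (v - u)) * B"
      using lipschitz_onD[OF \<phi>, of v u] M[of v] B[of u] that \<open>L \<ge> 0\<close>
      by (intro add_mono mult_mono) (auto simp: dist_real_def)
    finally show ?thesis
      by (simp add: algebra_simps)
  qed
  show ?thesis
    unfolding abs_cont_on_iff
  proof (intro allI impI)
    fix e :: real assume "e > 0"
    define C where "C = M + L * B + 1"
    have "M + L * B \<ge> 0"
      using \<open>M \<ge> 0\<close> \<open>L \<ge> 0\<close> \<open>B \<ge> 0\<close> by simp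
    then have "C > 0" "e / C > 0"
      using \<open>e > 0\<close> by (simp_all add: C_def)
    then obtain d where "d > 0" and d: "\<And>n u v. nonoverlapping_subintervals a b n u v \<Longrightarrow>
        (\<Sum>i<n. v i - u i) < d \<Longrightarrow> (\<Sum>i<n. \<bar>f (v i) - f (u i)\<bar>) < e / C"
      using abs_cont_onE[OF f] by blast
    show "\<exists>d>0. \<forall>n u v. nonoverlapping_subintervals a b n u v \<and> (\<Sum>i<n. v i - u i) < d \<longrightarrow>
        (\<Sum>i<n. \<bar>\<phi> (v i) * f (v i) - \<phi> (u i) * f (u i)\<bar>) < e"
    proof (intro exI conjI allI impI)
      show "min d (e / C) > 0"
        using \<open>d > 0\<close> \<open>e / C > 0\<close> by simp
      fix n u v
      assume H: "nonoverlapping_subintervals a b n u v \<and> (\<Sum>i<n. v i - u i) < min d (e / C)"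
      then have "(\<Sum>i<n. \<bar>f (v i) - f (u i)\<bar>) \<le> e / C" "(\<Sum>i<n. v i - u i) \<le> e / C"
        using d[of n u v] by auto
      have "(\<Sum>i<n. \<bar>\<phi> (v i) * f (v i) - \<phi> (u i) * f (u i)\<bar>)
          \<le> (\<Sum>i<n. M * \<bar>f (v i) - f (u i)\<bar> + L * B * (v i - u i))"
        using H var by (intro sum_mono) (auto simp: nonoverlapping_subintervals_def)
      also have "\<dots> = M * (\<Sum>i<n. \<bar>f (v i) - f (u i)\<bar>) + L * B * (\<Sum>i<n. v i - u i)"
        by (simp add: sum.distrib sum_distrib_left)
      also have "\<dots> \<le> M * (e / C) + L * B * (e / C)"
        using \<open>M \<ge> 0\<close> \<open>L \<ge> 0\<close> \<open>B \<ge> 0\<close> \<open>(\<Sum>i<n. \<bar>f (v i) - f (u i)\<bar>) \<le> e / C\<close>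
          \<open>(\<Sum>i<n. v i - u i) \<le> e / C\<close>
        by (intro add_mono mult_left_mono) auto
      also have "\<dots> = (M + L * B) * (e / C)"
        by (simp add: algebra_simps)
      also have "\<dots> < C * (e / C)"
        using \<open>e / C > 0\<close> by (intro mult_strict_right_mono) (simp_all add: C_def)
      also have "\<dots> = e"
        using \<open>C > 0\<close> by simp
      finally show "(\<Sum>i<n. \<bar>\<phi> (v i) * f (v i) - \<phi> (u i) * f (u i)\<bar>) < e" .
    qed
  qed
qed

lemma sum_content_le_measure:
  fixes G :: "'a::euclidean_space set"
  assumes q: "q tagged_partial_division_of S"
    and sub: "\<And>x K. (x, K) \<in> q \<Longrightarrow> K \<subseteq> G" and G: "G \<in> lmeasurable"
  shows "(\<Sum>(x, K)\<in>q. measure lborel K) \<le> measure lebesgue G"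
proof -
  note qD = tagged_partial_division_ofD[OF q]
  have box: "\<exists>c d. snd i = cbox c d" if "i \<in> q" for i
    using qD(4)[of "fst i" "snd i"] that by simp
  then have lmeas: "snd i \<in> lmeasurable" if "i \<in> q" for i
    using that by fastforce
  have "pairwise (\<lambda>i j. negligible (snd i \<inter> snd j)) q"
  proof (rule pairwiseI)
    fix i j assume ij: "i \<in> q" "j \<in> q" "i \<noteq> j"
    then have "interior (snd i) \<inter> interior (snd j) = {}"
      using qD(5)[of "fst i" "snd i" "fst j" "snd j"] by simp
    moreover obtain c d c' d' where "snd i = cbox c d" "snd j = cbox c' d'"
      using box ij by metis
    ultimately have "snd i \<inter> snd j \<subseteq> (cbox c d - box c d) \<union> (cbox c' d' - box c' d')"
      by auto
    then show "negligible (snd i \<inter> snd j)"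
      by (rule negligible_subset[rotated]) (simp add: negligible_frontier_interval)
  qed
  have "(\<Sum>(x, K)\<in>q. measure lborel K) = (\<Sum>i\<in>q. measure lebesgue (snd i))"
  proof (rule sum.cong[OF refl])
    fix i assume "i \<in> q"
    then obtain c d where "snd i = cbox c d"
      using box by blast
    then show "(case i of (x, K) \<Rightarrow> measure lborel K) = measure lebesgue (snd i)"
      by (simp add: split_beta)
  qed
  also have "\<dots> = measure lebesgue (\<Union>(snd ` q))"
    using measure_negligible_finite_Union_image[OF qD(1) lmeas \<open>pairwise _ q\<close>] by simp
  also have "\<dots> \<le> measure lebesgue G"
  proof (rule measure_mono_fmeasurable[OF _ _ G])
    show "\<Union>(snd ` q) \<subseteq> G"
      using sub by fastforce
    show "\<Union>(snd ` q) \<in> sets lebesgue"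
      using lmeas qD(1) by auto
  qed
  finally show ?thesis .
qed

lemma negligible_outer_open:
  assumes "negligible N" "e > 0"
  obtains G where "open G" "N \<subseteq> G" "G \<in> lmeasurable" "measure lebesgue G < e"
proof -
  obtain G where G: "open G" "N \<subseteq> G" "G - N \<in> lmeasurable" "emeasure lebesgue (G - N) < ennreal e"
    using sets_lebesgue_outer_open[OF negligible_imp_sets[OF assms(1)] assms(2)] .
  have "G = (G - N) \<union> N"
    using G(2) by blast
  then have "G \<in> lmeasurable"
    using G(3) negligible_imp_measurable[OF assms(1)] by (metis fmeasurable.Un)
  have "measure lebesgue G = measure lebesgue (G - N)"
    by (rule measure_negligible_symdiff[OF G(3)], rule negligible_subset[OF assms(1)]) auto
  moreover have "measure lebesgue (G - N) < e"
    using G(3,4) assms(2) by (simp add: emeasure_eq_measure2 ennreal_less_iff)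
  ultimately show ?thesis
    using G(1,2) \<open>G \<in> lmeasurable\<close> that by auto
qed

lemma has_real_derivative_straddle:
  assumes "(h has_real_derivative g) (at x)" "c > 0"
  obtains r where "r > 0"
    "\<And>u v. x \<in> {u..v} \<Longrightarrow> {u..v} \<subseteq> ball x r \<Longrightarrow> \<bar>(v - u) * g - (h v - h u)\<bar> \<le> c * (v - u)"
proof -
  obtain r where "r > 0" and r: "\<And>y. \<bar>y - x\<bar> < r \<Longrightarrow> \<bar>h y - h x - g * (y - x)\<bar> \<le> c * \<bar>y - x\<bar>"
    using assms unfolding has_field_derivative_def has_derivative_at_alt by fastforce
  show ?thesis
  proof (rule that[OF \<open>r > 0\<close>])
    fix u v assume "x \<in> {u..v}" "{u..v} \<subseteq> ball x r"
    moreover have "u \<in> {u..v}" "v \<in> {u..v}"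
      using \<open>x \<in> {u..v}\<close> by auto
    ultimately have "u \<in> ball x r" "v \<in> ball x r"
      by blast+
    then have "\<bar>u - x\<bar> < r" "\<bar>v - x\<bar> < r" "u \<le> x" "x \<le> v"
      using \<open>x \<in> {u..v}\<close> by (auto simp: dist_real_def)
    with r[of u] r[of v] show "\<bar>(v - u) * g - (h v - h u)\<bar> \<le> c * (v - u)"
      by (simp add: abs_le_iff algebra_simps)
  qed
qed

lemma abs_cont_on_small_open_cover:
  assumes "abs_cont_on a b h" "negligible N" "e > 0"
  obtains G where "open G" "N \<subseteq> G"
    "\<And>q. q tagged_partial_division_of {a..b} \<Longrightarrow> (\<And>x K. (x, K) \<in> q \<Longrightarrow> K \<subseteq> G) \<Longrightarrow>
       (\<Sum>(x, K)\<in>q. \<bar>h (Sup K) - h (Inf K)\<bar>) < e"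
proof -
  obtain \<delta> where "\<delta> > 0" and \<delta>: "\<And>q. q tagged_partial_division_of {a..b} \<Longrightarrow>
      (\<Sum>(x, K)\<in>q. measure lborel K) < \<delta> \<Longrightarrow> (\<Sum>(x, K)\<in>q. \<bar>h (Sup K) - h (Inf K)\<bar>) < e"
    using abs_cont_on_tagged_partial_division[OF assms(1,3)] by blast
  obtain G where G: "open G" "N \<subseteq> G" "G \<in> lmeasurable" "measure lebesgue G < \<delta>"
    using negligible_outer_open[OF assms(2) \<open>\<delta> > 0\<close>] by blast
  show ?thesis
  proof (rule that[OF G(1,2)])
    fix q assume q: "q tagged_partial_division_of {a..b}" and sub: "\<And>x K. (x, K) \<in> q \<Longrightarrow> K \<subseteq> G"
    have "(\<Sum>(x, K)\<in>q. measure lborel K) \<le> measure lebesgue G"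
      using q sub G(3) by (rule sum_content_le_measure)
    with G(4) show "(\<Sum>(x, K)\<in>q. \<bar>h (Sup K) - h (Inf K)\<bar>) < e"
      by (intro \<delta>[OF q]) simp
  qed
qed

lemma tagged_division_riemann_sum_error:
  fixes h g :: "real \<Rightarrow> real"
  assumes p: "p tagged_division_of {a..b}" and "a \<le> b" "c \<ge> 0"
    and bad: "(\<Sum>(x, K)\<in>{i\<in>p. fst i \<in> N}. \<bar>h (Sup K) - h (Inf K)\<bar>) < e"
    and good: "\<And>x K. (x, K) \<in> p \<Longrightarrow> x \<notin> N \<Longrightarrow>
      \<bar>measure lborel K * g x - (h (Sup K) - h (Inf K))\<bar> \<le> c * measure lborel K"
  shows "\<bar>(\<Sum>(x, K)\<in>p. measure lborel K * (if x \<in> N then 0 else g x)) - (h b - h a)\<bar> < e + c * (b - a)"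
proof -
  define F where "F = (\<lambda>(x, K). measure lborel K * (if x \<in> N then 0 else g x) - (h (Sup K) - h (Inf K)))"
  have fin: "finite p"
    using p by blast
  have "(\<Sum>(x, K)\<in>p. measure lborel K * (if x \<in> N then 0 else g x)) - (h b - h a) = sum F p"
    using additive_tagged_division_1[OF \<open>a \<le> b\<close> p, of h] by (simp add: F_def sum_subtractf split_def)
  also have "\<dots> = sum F {i\<in>p. fst i \<in> N} + sum F {i\<in>p. fst i \<notin> N}"
    using fin by (simp add: sum.Int_Diff[of p F "{i. fst i \<in> N}"] Int_def set_diff_eq)
  finally have split: "(\<Sum>(x, K)\<in>p. measure lborel K * (if x \<in> N then 0 else g x)) - (h b - h a) =
      sum F {i\<in>p. fst i \<in> N} + sum F {i\<in>p. fst i \<notin> N}" .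
  have "\<bar>sum F {i\<in>p. fst i \<in> N}\<bar> \<le> (\<Sum>(x, K)\<in>{i\<in>p. fst i \<in> N}. \<bar>h (Sup K) - h (Inf K)\<bar>)"
    by (rule order_trans[OF sum_abs]) (auto simp: F_def intro!: sum_mono)
  moreover have "\<bar>sum F {i\<in>p. fst i \<notin> N}\<bar> \<le> (\<Sum>(x, K)\<in>{i\<in>p. fst i \<notin> N}. c * measure lborel K)"
    by (rule order_trans[OF sum_abs]) (auto simp: F_def intro!: sum_mono good)
  moreover have "(\<Sum>(x, K)\<in>{i\<in>p. fst i \<notin> N}. c * measure lborel K) \<le> (\<Sum>(x, K)\<in>p. c * measure lborel K)"
    using fin \<open>c \<ge> 0\<close> by (intro sum_mono2) auto
  moreover have "(\<Sum>(x, K)\<in>p. c * measure lborel K) = c * (b - a)"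
    using additive_content_tagged_division[of p a b] p \<open>a \<le> b\<close>
    by (simp add: sum_distrib_left[symmetric] split_def)
  ultimately show ?thesis
    unfolding split using bad by linarith
qed

lemma abs_cont_on_riemann_sum_gauge:
  fixes h g :: "real \<Rightarrow> real"
  assumes "a \<le> b" and ac: "abs_cont_on a b h" and "negligible N"
    and der: "\<And>x. x \<in> {a..b} - N \<Longrightarrow> (h has_real_derivative g x) (at x)" and "e > 0"
  obtains \<gamma> where "gauge \<gamma>"
    "\<And>p. p tagged_division_of {a..b} \<Longrightarrow> \<gamma> fine p \<Longrightarrow>
       \<bar>(\<Sum>(x, K)\<in>p. measure lborel K * (if x \<in> N then 0 else g x)) - (h b - h a)\<bar> < e"
proof -
  obtain G where G: "open G" "N \<subseteq> G" and small: "\<And>q. q tagged_partial_division_of {a..b} \<Longrightarrow>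
      (\<And>x K. (x, K) \<in> q \<Longrightarrow> K \<subseteq> G) \<Longrightarrow> (\<Sum>(x, K)\<in>q. \<bar>h (Sup K) - h (Inf K)\<bar>) < e / 2"
    using abs_cont_on_small_open_cover[OF ac \<open>negligible N\<close>, of "e / 2"] \<open>e > 0\<close> by auto
  define c where "c = e / (2 * (b - a + 1))"
  have "c > 0" "c * (b - a) \<le> e / 2"
    using \<open>e > 0\<close> \<open>a \<le> b\<close> by (auto simp: c_def field_simps)
  have "\<exists>r>0. (x \<in> N \<longrightarrow> ball x r \<subseteq> G) \<and> (x \<in> {a..b} - N \<longrightarrow> (\<forall>u v. x \<in> {u..v} \<longrightarrow>
      {u..v} \<subseteq> ball x r \<longrightarrow> \<bar>(v - u) * g x - (h v - h u)\<bar> \<le> c * (v - u)))" for x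
  proof (cases "x \<in> {a..b} - N")
    case True
    then obtain r where "r > 0" "\<And>u v. x \<in> {u..v} \<Longrightarrow> {u..v} \<subseteq> ball x r \<Longrightarrow>
        \<bar>(v - u) * g x - (h v - h u)\<bar> \<le> c * (v - u)"
      using has_real_derivative_straddle[OF der \<open>c > 0\<close>] by metis
    with True show ?thesis
      by blast
  next
    case False
    obtain r where "r > 0" "x \<in> N \<longrightarrow> ball x r \<subseteq> G"
      using G open_contains_ball_eq by blast
    with False show ?thesis
      by blast
  qed
  then obtain r where r: "\<And>x. r x > 0" "\<And>x. x \<in> N \<Longrightarrow> ball x (r x) \<subseteq> G"
    "\<And>x u v. x \<in> {a..b} - N \<Longrightarrow> x \<in> {u..v} \<Longrightarrow> {u..v} \<subseteq> ball x (r x) \<Longrightarrow>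
       \<bar>(v - u) * g x - (h v - h u)\<bar> \<le> c * (v - u)"
    by metis
  show ?thesis
  proof (rule that)
    show "gauge (\<lambda>x. ball x (r x))"
      using r(1) by (simp add: gauge_ball_dependent)
    fix p assume p: "p tagged_division_of {a..b}" and "(\<lambda>x. ball x (r x)) fine p"
    then have fine: "\<And>x K. (x, K) \<in> p \<Longrightarrow> K \<subseteq> ball x (r x)"
      by (auto dest: fineD)
    have "(\<Sum>(x, K)\<in>{i\<in>p. fst i \<in> N}. \<bar>h (Sup K) - h (Inf K)\<bar>) < e / 2"
    proof (rule small)
      show "{i\<in>p. fst i \<in> N} tagged_partial_division_of {a..b}"
        using p by (auto intro: tagged_partial_division_subset simp: tagged_division_of_def)
      show "K \<subseteq> G" if "(x, K) \<in> {i\<in>p. fst i \<in> N}" for x K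
        using that fine r(2) by fastforce
    qed
    moreover have "\<bar>measure lborel K * g x - (h (Sup K) - h (Inf K))\<bar> \<le> c * measure lborel K"
      if xK: "(x, K) \<in> p" and "x \<notin> N" for x K
    proof -
      obtain u v where "K = {u..v}" "x \<in> K" "K \<subseteq> {a..b}"
        using tagged_division_ofD(2-4)[OF p xK] by auto
      then show ?thesis
        using r(3)[of x u v] fine[OF xK] \<open>x \<notin> N\<close> by (auto simp: mult.commute)
    qed
    ultimately have "\<bar>(\<Sum>(x, K)\<in>p. measure lborel K * (if x \<in> N then 0 else g x)) - (h b - h a)\<bar>
        < e / 2 + c * (b - a)"
      using \<open>c > 0\<close> by (intro tagged_division_riemann_sum_error[OF p \<open>a \<le> b\<close>]) auto
    with \<open>c * (b - a) \<le> e / 2\<close> show "\<bar>(\<Sum>(x, K)\<in>p. measure lborel K * (if x \<in> N then 0 else g x))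
        - (h b - h a)\<bar> < e"
      by simp
  qed
qed

lemma abs_cont_on_has_integral_derivative:
  fixes h g :: "real \<Rightarrow> real"
  assumes "a \<le> b" and ac: "abs_cont_on a b h"
    and der: "AE x in lborel. x \<in> {a<..<b} \<longrightarrow> (h has_real_derivative g x) (at x)"
  shows "(g has_integral (h b - h a)) {a..b}"
proof -
  obtain N0 where N0: "{x \<in> space lborel. \<not> (x \<in> {a<..<b} \<longrightarrow> (h has_real_derivative g x) (at x))} \<subseteq> N0"
      "emeasure lborel N0 = 0" "N0 \<in> sets lborel"
    using der by (rule AE_E)
  define N where "N = N0 \<union> {a, b}"
  have "negligible N0"
    using N0(2,3) by (simp add: negligible_iff_null_sets null_sets_completionI null_setsI)
  then have negN: "negligible N"
    unfolding N_def by (simp add: negligible_Un)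
  have derN: "(h has_real_derivative g x) (at x)" if "x \<in> {a..b} - N" for x
  proof -
    have "x \<in> {a<..<b}" "x \<notin> N0"
      using that unfolding N_def by auto
    then show ?thesis
      using N0(1) by auto
  qed
  have "((\<lambda>x. if x \<in> N then 0 else g x) has_integral (h b - h a)) {a..b}"
    unfolding has_integral_real
  proof (intro allI impI)
    fix e :: real assume "e > 0"
    show "\<exists>\<gamma>. gauge \<gamma> \<and> (\<forall>\<D>. \<D> tagged_division_of {a..b} \<and> \<gamma> fine \<D> \<longrightarrow>
        norm ((\<Sum>(x, K)\<in>\<D>. measure lborel K *\<^sub>R (if x \<in> N then 0 else g x)) - (h b - h a)) < e)"
      by (rule abs_cont_on_riemann_sum_gauge[OF \<open>a \<le> b\<close> ac negN derN \<open>e > 0\<close>]) auto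
  qed
  then show ?thesis
    by (rule has_integral_spike[OF negN, rotated]) simp
qed

lemma abs_cont_on_integration_by_parts:
  fixes f g \<phi> \<phi>' :: "real \<Rightarrow> real"
  assumes "a \<le> b" and f: "abs_cont_on a b f"
    and g: "AE x in lborel. x \<in> {a<..<b} \<longrightarrow> (f has_real_derivative g x) (at x)"
    and \<phi>: "\<And>x. (\<phi> has_real_derivative \<phi>' x) (at x)" and \<phi>': "continuous_on {a..b} \<phi>'"
  shows "((\<lambda>x. \<phi> x * g x) has_integral \<phi> b * f b - \<phi> a * f a - integral {a..b} (\<lambda>x. \<phi>' x * f x)) {a..b}"
proof -
  obtain L where "L \<ge> 0" and L: "\<And>x. x \<in> {a..b} \<Longrightarrow> \<bar>\<phi>' x\<bar> \<le> L"
    using continuous_on_compact_bound[OF compact_Icc \<phi>'] by auto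
  have "L-lipschitz_on {a..b} \<phi>"
  proof (rule lipschitz_onI)
    fix x y assume "x \<in> {a..b}" "y \<in> {a..b}"
    then have "norm (\<phi> x - \<phi> y) \<le> L * norm (x - y)"
    proof (rule field_differentiable_bound[OF convex_real_interval(5)[of a b], rotated 2])
      show "(\<phi> has_field_derivative \<phi>' z) (at z within {a..b})" for z
        using \<phi> by (rule has_field_derivative_at_within)
      show "norm (\<phi>' z) \<le> L" if "z \<in> {a..b}" for z
        using L[OF that] by simp
    qed
    then show "dist (\<phi> x) (\<phi> y) \<le> L * dist x y"
      by (simp add: dist_norm)
  qed fact
  then have ac: "abs_cont_on a b (\<lambda>x. \<phi> x * f x)"
    by (rule abs_cont_on_lipschitz_mult[OF f])
  from g have "AE x in lborel. x \<in> {a<..<b} \<longrightarrow>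
      ((\<lambda>x. \<phi> x * f x) has_real_derivative \<phi>' x * f x + \<phi> x * g x) (at x)"
    by eventually_elim (auto intro!: derivative_eq_intros \<phi>)
  then have "((\<lambda>x. \<phi>' x * f x + \<phi> x * g x) has_integral \<phi> b * f b - \<phi> a * f a) {a..b}"
    by (rule abs_cont_on_has_integral_derivative[OF \<open>a \<le> b\<close> ac])
  moreover have "((\<lambda>x. \<phi>' x * f x) has_integral integral {a..b} (\<lambda>x. \<phi>' x * f x)) {a..b}"
    using \<phi>' abs_cont_on_imp_continuous_on[OF f]
    by (intro integrable_integral integrable_continuous_interval continuous_intros)
  ultimately have "((\<lambda>x. (\<phi>' x * f x + \<phi> x * g x) - \<phi>' x * f x) has_integral
      \<phi> b * f b - \<phi> a * f a - integral {a..b} (\<lambda>x. \<phi>' x * f x)) {a..b}"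
    by (rule has_integral_diff)
  then show ?thesis
    by simp
qed

lemma set_integrable_mult_continuous:
  fixes f c :: "real \<Rightarrow> real"
  assumes f: "set_integrable lborel {a..b} f" and c: "continuous_on {a..b} c"
  shows "set_integrable lborel {a..b} (\<lambda>x. c x * f x)"
proof -
  obtain M where M: "\<And>x. x \<in> {a..b} \<Longrightarrow> \<bar>c x\<bar> \<le> M"
    using continuous_on_compact_bound[OF compact_Icc c] by auto
  show ?thesis
  proof (rule set_integrable_bound[OF _ _ AE_I2])
    show "set_integrable lborel {a..b} (\<lambda>x. M * f x)"
      using f by simp
    show "x \<in> {a..b} \<longrightarrow> norm (c x * f x) \<le> norm (M * f x)" for x
    proof
      assume "x \<in> {a..b}"
      then have "\<bar>c x\<bar> \<le> \<bar>M\<bar>"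
        using M[of x] by linarith
      then show "norm (c x * f x) \<le> norm (M * f x)"
        by (simp add: abs_mult mult_right_mono)
    qed
    have "(\<lambda>x. indicator {a..b} x *\<^sub>R c x) \<in> borel_measurable lborel"
      using set_measurable_continuous_on[OF _ c] unfolding set_borel_measurable_def by simp
    moreover have "(\<lambda>x. indicator {a..b} x *\<^sub>R f x) \<in> borel_measurable lborel"
      using f unfolding set_integrable_def by (rule borel_measurable_integrable)
    ultimately have "(\<lambda>x. (indicator {a..b} x *\<^sub>R c x) * (indicator {a..b} x *\<^sub>R f x)) \<in> borel_measurable lborel"
      by (rule borel_measurable_times)
    also have "(\<lambda>x. (indicator {a..b} x *\<^sub>R c x) * (indicator {a..b} x *\<^sub>R f x)) =
        (\<lambda>x. indicator {a..b} x *\<^sub>R (c x * f x))"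
      by (auto simp: indicator_def)
    finally show "set_borel_measurable lborel {a..b} (\<lambda>x. c x * f x)"
      unfolding set_borel_measurable_def .
  qed
qed

lemma set_integral_reflect_interval:
  fixes g :: "real \<Rightarrow> real"
  shows "(LINT z:{0..t}|lborel. g (t - z)) = (LINT s:{0..t}|lborel. g s)"
  unfolding set_lebesgue_integral_def
  by (subst lborel_integral_real_affine[where c="-1" and t=t, of "\<lambda>s. indicator {0..t} s *\<^sub>R g s"])
     (auto intro!: Bochner_Integration.integral_cong split: split_indicator)

lemma
  fixes k g :: "real \<Rightarrow> real"
  assumes g: "set_integrable lborel {0..t} g" and k: "continuous_on {0..t} k"
  shows integrable_on_convolution: "(\<lambda>s. k (t - s) * g s) integrable_on {0..t}"
    and set_integral_convolution:
      "(LINT z:{0..t}|lborel. k z * g (t - z)) = integral {0..t} (\<lambda>s. k (t - s) * g s)"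
proof -
  have "continuous_on {0..t} (\<lambda>s. k (t - s))"
    by (intro continuous_on_compose2[OF k]) (auto intro!: continuous_intros)
  then have kg: "set_integrable lborel {0..t} (\<lambda>s. k (t - s) * g s)"
    by (rule set_integrable_mult_continuous[OF g])
  then show "(\<lambda>s. k (t - s) * g s) integrable_on {0..t}"
    by (rule set_borel_integral_eq_integral(1))
  show "(LINT z:{0..t}|lborel. k z * g (t - z)) = integral {0..t} (\<lambda>s. k (t - s) * g s)"
    using set_integral_reflect_interval[where g="\<lambda>s. k (t - s) * g s" and t=t]
      set_borel_integral_eq_integral(2)[OF kg] by simp
qed

lemma abs_set_integral_convolution_le:
  fixes k g :: "real \<Rightarrow> real"
  assumes g: "set_integrable lborel {0..T} g" and k: "continuous_on {0..T} k"
    and t: "t \<in> {0..T}" and S: "\<And>z. z \<in> {0..T} \<Longrightarrow> \<bar>k z\<bar> \<le> S"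
  shows "\<bar>LINT z:{0..t}|lborel. k z * g (t - z)\<bar> \<le> S * (LINT s:{0..T}|lborel. \<bar>g s\<bar>)"
proof -
  have gt: "set_integrable lborel {0..t} g"
    by (rule set_integrable_subset[OF g]) (use t in auto)
  have kt: "continuous_on {0..t} k"
    by (rule continuous_on_subset[OF k]) (use t in auto)
  have "norm (integral {0..t} (\<lambda>s. k (t - s) * g s)) \<le> integral {0..t} (\<lambda>s. S * \<bar>g s\<bar>)"
  proof (rule integral_norm_bound_integral[OF integrable_on_convolution[OF gt kt]])
    show "(\<lambda>s. S * \<bar>g s\<bar>) integrable_on {0..t}"
      using set_integrable_abs[OF gt] by (intro integrable_on_mult_right set_borel_integral_eq_integral(1))
    show "norm (k (t - s) * g s) \<le> S * \<bar>g s\<bar>" if "s \<in> {0..t}" for s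
      using S[of "t - s"] that t by (auto simp: abs_mult intro!: mult_right_mono)
  qed
  also have "\<dots> \<le> integral {0..T} (\<lambda>s. S * \<bar>g s\<bar>)"
    using t S[of 0] set_integrable_abs[OF g] set_integrable_abs[OF gt]
    by (intro integral_subset_le integrable_on_mult_right set_borel_integral_eq_integral(1)) auto
  also have "\<dots> = S * (LINT s:{0..T}|lborel. \<bar>g s\<bar>)"
    using set_borel_integral_eq_integral(2)[OF set_integrable_abs[OF g]] by simp
  finally show ?thesis
    unfolding set_integral_convolution[OF gt kt] by simp
qed

lemma abs_le_SUP_abs:
  fixes f :: "real \<Rightarrow> real"
  assumes "continuous_on {a..b} f" "z \<in> {a..b}"
  shows "\<bar>f z\<bar> \<le> (SUP x\<in>{a..b}. \<bar>f x\<bar>)"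
proof (rule cSUP_upper[OF assms(2)])
  show "bdd_above ((\<lambda>x. \<bar>f x\<bar>) ` {a..b})"
    using assms(1) by (intro bounded_imp_bdd_above compact_imp_bounded compact_continuous_image
        compact_Icc continuous_intros)
qed

lemma continuous_on_prony_err:
  assumes "\<alpha> < 1"
  shows "continuous_on {0..} (prony_err \<alpha> N \<beta> \<tau>)"
  \<comment> \<open>no condition on \<tau> is needed: a term with \<tau> k = 0 is constant, as z / 0 = 0\<close>
  unfolding prony_err_def divide_inverse using assms
  by (intro continuous_intros continuous_on_powr') auto

lemma exp_kernel_has_integral:
  fixes f1 f2 :: "real \<Rightarrow> real"
  assumes "\<tau> \<noteq> 0" "0 \<le> t" and f1: "abs_cont_on 0 t f1"
    and f2: "AE s in lborel. s \<in> {0<..<t} \<longrightarrow> (f1 has_real_derivative f2 s) (at s)"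
  shows "((\<lambda>s. \<tau> * (exp ((s - t) / \<tau>) - 1) * f2 s) has_integral
           \<tau> * (1 - exp (- t / \<tau>)) * f1 0 - integral {0..t} (\<lambda>s. exp ((s - t) / \<tau>) * f1 s)) {0..t}"
proof -
  define E where "E = integral {0..t} (\<lambda>s. exp ((s - t) / \<tau>) * f1 s)"
  have "((\<lambda>s. exp ((s - t) / \<tau>) * f2 s) has_integral
      exp ((t - t) / \<tau>) * f1 t - exp ((0 - t) / \<tau>) * f1 0 - integral {0..t} (\<lambda>s. exp ((s - t) / \<tau>) / \<tau> * f1 s)) {0..t}"
  proof (rule abs_cont_on_integration_by_parts[OF \<open>0 \<le> t\<close> f1 f2])
    show "((\<lambda>s. exp ((s - t) / \<tau>)) has_real_derivative exp ((s - t) / \<tau>) / \<tau>) (at s)" for s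
      by (rule DERIV_cong[OF DERIV_fun_exp[OF DERIV_cdivide[OF DERIV_diff[OF DERIV_ident DERIV_const]]]]) simp
    show "continuous_on {0..t} (\<lambda>s. exp ((s - t) / \<tau>) / \<tau>)"
      unfolding divide_inverse by (intro continuous_intros)
  qed
  moreover have "integral {0..t} (\<lambda>s. exp ((s - t) / \<tau>) / \<tau> * f1 s) = E / \<tau>"
  proof -
    have "(\<lambda>s. exp ((s - t) / \<tau>) / \<tau> * f1 s) = (\<lambda>s. exp ((s - t) / \<tau>) * f1 s / \<tau>)"
      by (simp add: fun_eq_iff)
    then show ?thesis
      unfolding E_def by (simp only: integral_divide)
  qed
  ultimately have "((\<lambda>s. \<tau> * (exp ((s - t) / \<tau>) * f2 s) - \<tau> * f2 s) has_integral
      \<tau> * (f1 t - exp (- t / \<tau>) * f1 0 - E / \<tau>) - \<tau> * (f1 t - f1 0)) {0..t}"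
    by (intro has_integral_diff has_integral_mult_right
        abs_cont_on_has_integral_derivative[OF \<open>0 \<le> t\<close> f1 f2]) (simp add: E_def)
  then show ?thesis
    using \<open>\<tau> \<noteq> 0\<close> by (simp add: E_def algebra_simps)
qed

lemma prony_eq_integral:
  assumes "continuous_on {0..t} f1"
  shows "prony N \<beta> \<tau> f1 t =
    \<beta> 0 * f1 t + (\<Sum>k=1..N. \<beta> k * integral {0..t} (\<lambda>s. exp ((s - t) / \<tau> k) * f1 s))"
proof -
  have "(LINT s:{0..t}|lborel. \<beta> k * exp ((s - t) / \<tau> k) * f1 s) =
      \<beta> k * integral {0..t} (\<lambda>s. exp ((s - t) / \<tau> k) * f1 s)" for k
  proof -
    have "continuous_on {0..t} (\<lambda>s. exp ((s - t) / \<tau> k) * f1 s)"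
      using assms unfolding divide_inverse by (intro continuous_intros)
    then have "(LINT s:{0..t}|lborel. exp ((s - t) / \<tau> k) * f1 s) =
        integral {0..t} (\<lambda>s. exp ((s - t) / \<tau> k) * f1 s)"
      by (rule set_borel_integral_eq_integral(2)[OF borel_integrable_atLeastAtMost'])
    then show ?thesis
      by (simp add: set_integral_mult_right mult.assoc)
  qed
  then show ?thesis
    unfolding prony_def by simp
qed

lemma prony_err_convolution_has_integral:
  fixes f1 f2 :: "real \<Rightarrow> real"
  assumes "\<alpha> < 1" "\<forall>k\<in>{1..N}. \<tau> k \<noteq> 0" "0 \<le> t"
    and f1: "abs_cont_on 0 t f1"
    and f2: "AE s in lborel. s \<in> {0<..<t} \<longrightarrow> (f1 has_real_derivative f2 s) (at s)"
    and int: "set_integrable lborel {0..t} f2"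
  shows "((\<lambda>s. prony_err \<alpha> N \<beta> \<tau> (t - s) * f2 s) has_integral
    (LINT s:{0..t}|lborel. (t - s) powr (1 - \<alpha>) * f2 s) / Gamma (2 - \<alpha>) - \<beta> 0 * (f1 t - f1 0)
    + (\<Sum>k=1..N. \<beta> k * (\<tau> k * (1 - exp (- t / \<tau> k)) * f1 0
        - integral {0..t} (\<lambda>s. exp ((s - t) / \<tau> k) * f1 s)))) {0..t}"
proof -
  have expand: "prony_err \<alpha> N \<beta> \<tau> (t - s) * f2 s = (t - s) powr (1 - \<alpha>) * f2 s / Gamma (2 - \<alpha>)
      - \<beta> 0 * f2 s + (\<Sum>k=1..N. \<beta> k * (\<tau> k * (exp ((s - t) / \<tau> k) - 1) * f2 s))" for s
    by (simp add: prony_err_def algebra_simps sum_distrib_left sum_distrib_right)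
  have "continuous_on {0..t} (\<lambda>s. (t - s) powr (1 - \<alpha>))"
    using \<open>\<alpha> < 1\<close> by (intro continuous_on_powr') (auto intro!: continuous_intros)
  from set_integrable_mult_continuous[OF int this]
  have si: "set_integrable lborel {0..t} (\<lambda>s. (t - s) powr (1 - \<alpha>) * f2 s)" .
  have "((\<lambda>s. (t - s) powr (1 - \<alpha>) * f2 s) has_integral
      (LINT s:{0..t}|lborel. (t - s) powr (1 - \<alpha>) * f2 s)) {0..t}"
    unfolding set_borel_integral_eq_integral(2)[OF si]
    by (intro integrable_integral set_borel_integral_eq_integral(1)[OF si])
  then show ?thesis
    using assms(2) unfolding expand
    by (intro has_integral_add has_integral_diff has_integral_sum has_integral_mult_right has_integral_divide
        abs_cont_on_has_integral_derivative[OF \<open>0 \<le> t\<close> f1 f2] exp_kernel_has_integral[OF _ \<open>0 \<le> t\<close> f1 f2])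
      auto
qed

lemma caputo_minus_prony:
  fixes f1 f2 :: "real \<Rightarrow> real"
  assumes "\<alpha> < 1" "\<forall>k\<in>{1..N}. \<tau> k \<noteq> 0" "0 \<le> t"
    and f1: "abs_cont_on 0 t f1"
    and f2: "AE s in lborel. s \<in> {0<..<t} \<longrightarrow> (f1 has_real_derivative f2 s) (at s)"
    and int: "set_integrable lborel {0..t} f2"
  shows "caputo \<alpha> f1 f2 t - prony N \<beta> \<tau> f1 t =
           prony_err \<alpha> N \<beta> \<tau> t * f1 0 + (LINT z:{0..t}|lborel. prony_err \<alpha> N \<beta> \<tau> z * f2 (t - z))"
proof -
  define E where "E k = integral {0..t} (\<lambda>s. exp ((s - t) / \<tau> k) * f1 s)" for k
  define A where "A = (LINT s:{0..t}|lborel. (t - s) powr (1 - \<alpha>) * f2 s)"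
  define S where "S = (\<Sum>k=1..N. \<beta> k * \<tau> k * (exp (- t / \<tau> k) - 1))"
  have "continuous_on {0..t} (prony_err \<alpha> N \<beta> \<tau>)"
    by (rule continuous_on_subset[OF continuous_on_prony_err[OF \<open>\<alpha> < 1\<close>]]) auto
  have conv: "(LINT z:{0..t}|lborel. prony_err \<alpha> N \<beta> \<tau> z * f2 (t - z)) =
      A / Gamma (2 - \<alpha>) - \<beta> 0 * (f1 t - f1 0)
      + (\<Sum>k=1..N. \<beta> k * (\<tau> k * (1 - exp (- t / \<tau> k)) * f1 0 - E k))"
    unfolding set_integral_convolution[OF int \<open>continuous_on {0..t} _\<close>] A_def E_def
    by (rule integral_unique[OF prony_err_convolution_has_integral[OF assms]])
  have sums: "S * f1 0 + (\<Sum>k=1..N. \<beta> k * (\<tau> k * (1 - exp (- t / \<tau> k)) * f1 0 - E k))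
      = - (\<Sum>k=1..N. \<beta> k * E k)"
    unfolding S_def sum_distrib_right sum.distrib[symmetric] sum_negf[symmetric]
    by (rule sum.cong) (simp_all add: algebra_simps)
  have "caputo \<alpha> f1 f2 t = t powr (1 - \<alpha>) * f1 0 / Gamma (2 - \<alpha>) + A / Gamma (2 - \<alpha>)"
    by (simp add: caputo_def A_def add_divide_distrib)
  moreover have "prony N \<beta> \<tau> f1 t = \<beta> 0 * f1 t + (\<Sum>k=1..N. \<beta> k * E k)"
    unfolding E_def by (rule prony_eq_integral[OF abs_cont_on_imp_continuous_on[OF f1]])
  moreover have "prony_err \<alpha> N \<beta> \<tau> t * f1 0 =
      t powr (1 - \<alpha>) * f1 0 / Gamma (2 - \<alpha>) - \<beta> 0 * f1 0 + S * f1 0"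
    by (simp add: prony_err_def S_def algebra_simps)
  moreover have "\<beta> 0 * (f1 t - f1 0) = \<beta> 0 * f1 t - \<beta> 0 * f1 0"
    by (simp add: algebra_simps)
  ultimately show ?thesis
    unfolding conv using sums by linarith
qed

theorem lemma1:
  fixes \<alpha> T :: real and N :: nat and \<beta> \<tau> :: "nat \<Rightarrow> real"
    and f f1 f2 :: "real \<Rightarrow> real"
  assumes "0 < \<alpha>" "\<alpha> < 1" "0 < T" "1 \<le> N"
    and "\<forall>k\<in>{1..N}. \<tau> k \<noteq> 0"
    and "\<forall>t\<in>{0..T}. (f has_real_derivative f1 t) (at t within {0..T})"
    and "abs_cont_on 0 T f1"
    and "AE t in lborel. t \<in> {0<..<T} \<longrightarrow> (f1 has_real_derivative f2 t) (at t)"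
    and "set_integrable lborel {0..T} f2"
  shows "(\<forall>t\<in>{0..T}. caputo \<alpha> f1 f2 t - prony N \<beta> \<tau> f1 t =
            prony_err \<alpha> N \<beta> \<tau> t * f1 0
            + (LINT z:{0..t}|lborel. prony_err \<alpha> N \<beta> \<tau> z * f2 (t - z)))
       \<and> (\<forall>t\<in>{0..T}. \<bar>caputo \<alpha> f1 f2 t - prony N \<beta> \<tau> f1 t\<bar> \<le>
            (SUP z\<in>{0..T}. \<bar>prony_err \<alpha> N \<beta> \<tau> z\<bar>)
            * (\<bar>f1 0\<bar> + (LINT s:{0..T}|lborel. \<bar>f2 s\<bar>)))"
proof -
  \<comment> \<open>Only f' = f1 and f'' = f2 enter.\<close>
  let ?\<epsilon> = "prony_err \<alpha> N \<beta> \<tau>"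
  let ?S = "SUP z\<in>{0..T}. \<bar>?\<epsilon> z\<bar>"
  have identity: "caputo \<alpha> f1 f2 t - prony N \<beta> \<tau> f1 t =
      ?\<epsilon> t * f1 0 + (LINT z:{0..t}|lborel. ?\<epsilon> z * f2 (t - z))" if t: "t \<in> {0..T}" for t
  proof (rule caputo_minus_prony[OF \<open>\<alpha> < 1\<close> assms(5)])
    show "abs_cont_on 0 t f1"
      by (rule abs_cont_on_subinterval[OF assms(7)]) (use t in auto)
    show "AE s in lborel. s \<in> {0<..<t} \<longrightarrow> (f1 has_real_derivative f2 s) (at s)"
      using assms(8) by eventually_elim (use t in auto)
    show "set_integrable lborel {0..t} f2"
      by (rule set_integrable_subset[OF assms(9)]) (use t in auto)
  qed (use t in auto)
  have \<epsilon>: "continuous_on {0..T} ?\<epsilon>"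
    using continuous_on_prony_err[OF \<open>\<alpha> < 1\<close>] by (rule continuous_on_subset) auto
  have "\<bar>caputo \<alpha> f1 f2 t - prony N \<beta> \<tau> f1 t\<bar> \<le> ?S * (\<bar>f1 0\<bar> + (LINT s:{0..T}|lborel. \<bar>f2 s\<bar>))"
    if t: "t \<in> {0..T}" for t
  proof -
    have "\<bar>?\<epsilon> t * f1 0\<bar> \<le> ?S * \<bar>f1 0\<bar>"
      using abs_le_SUP_abs[OF \<epsilon> t] by (simp add: abs_mult mult_right_mono)
    moreover have "\<bar>LINT z:{0..t}|lborel. ?\<epsilon> z * f2 (t - z)\<bar> \<le> ?S * (LINT s:{0..T}|lborel. \<bar>f2 s\<bar>)"
      using assms(9) \<epsilon> t abs_le_SUP_abs[OF \<epsilon>] by (rule abs_set_integral_convolution_le)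
    ultimately show ?thesis
      unfolding identity[OF t] distrib_left by linarith
  qed
  with identity show ?thesis
    by blast
qed

end
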